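(* Let $G$ be a graph on $V$, let $W\subseteq V$ be reducible in $G$, and let $W_1,W_2\subseteq V\setminus W$. Then $$\operatorname{rank}_{\Gamma_W(G)}(W_1,W_2)=\operatorname{rank}_G(W\cup W_1,\,W\cup W_2)-\operatorname{rank}_G(W).$$
   Context: A graph means a finite simple graph in which loops are allowed, with adjacency matrix $A$ over $\mathbf F_2$ ($A_{vv}=1$ iff $v$ has a loop). Let $\mathcal V$ be the $\mathbf F_2$-vector space with basis $V$ and $\mathcal E(x,y)=x^TAy$. For $W\subseteq V$, $\langle W\rangle$ is the span of $W$ and $\langle W\rangle^{\perp\mathcal E}=\{x\in\mathcal V:\mathcal E(x,w)=0\ \forall w\in\langle W\rangle\}$. $W$ is reducible in $G$ if $\langle W\rangle+\langle W\rangle^{\perp\mathcal E}=\mathcal V$. For reducible $W$, $\mathcal E^W(x_1,x_2)=\mathcal E(x_1',x_2')$ where $x_i'\in\langle W\rangle^{\perp\mathcal E}$ with $x_i-x_i'\in\langle W\rangle$ (well defined), and the graph reduction $\Gamma_W(G)$ is the graph on $V\setminus W$ in which $v,w$ (possibly equal) are joined iff $\mathcal E^W(v,w)=1$. For a graph $H$ and vertex subsets $W_1,W_2$, $\operatorname{rank}_H(W_1,W_2)$ is the rank over $\mathbf F_2$ of the submatrix of the adjacency matrix of $H$ with rows $W_1$ and columns $W_2$, and $\operatorname{rank}_H(W)=\operatorname{rank}_H(W,W)$. *)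

theory Defs
  imports Main "HOL.Vector_Spaces" "HOL-Library.Z2" "HOL-Library.Function_Algebras"
begin

text \<open>The field F2 is the type bit (HOL-Library.Z2). Vectors of the F2-vector space
  with basis V are functions 'v => bit; scalar multiplication is pointwise.\<close>

definition scaleF2 :: "bit \<Rightarrow> ('v \<Rightarrow> bit) \<Rightarrow> ('v \<Rightarrow> bit)" where
  "scaleF2 c x = (\<lambda>v. c * x v)"

definition delta :: "'v \<Rightarrow> ('v \<Rightarrow> bit)" where
  "delta v = (\<lambda>u. if u = v then 1 else 0)"

text \<open>Span of a vertex set W (as set of basis vectors); vspan V is the space script-V.\<close>
definition vspan :: "'v set \<Rightarrow> ('v \<Rightarrow> bit) set" where
  "vspan W = module.span scaleF2 (delta ` W)"

definition is_graph :: "'v set \<Rightarrow> ('v \<Rightarrow> 'v \<Rightarrow> bool) \<Rightarrow> bool" where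
  "is_graph V A \<longleftrightarrow> finite V \<and> (\<forall>u v. A u v = A v u) \<and> (\<forall>u v. A u v \<longrightarrow> u \<in> V \<and> v \<in> V)"

definition adjmat :: "('v \<Rightarrow> 'v \<Rightarrow> bool) \<Rightarrow> 'v \<Rightarrow> 'v \<Rightarrow> bit" where
  "adjmat A u v = (if A u v then 1 else 0)"

definition formE :: "'v set \<Rightarrow> ('v \<Rightarrow> 'v \<Rightarrow> bool) \<Rightarrow> ('v \<Rightarrow> bit) \<Rightarrow> ('v \<Rightarrow> bit) \<Rightarrow> bit" where
  "formE V A x y = (\<Sum>u\<in>V. \<Sum>v\<in>V. x u * adjmat A u v * y v)"

definition perpE :: "'v set \<Rightarrow> ('v \<Rightarrow> 'v \<Rightarrow> bool) \<Rightarrow> 'v set \<Rightarrow> ('v \<Rightarrow> bit) set" where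
  "perpE V A W = {x \<in> vspan V. \<forall>w \<in> vspan W. formE V A x w = 0}"

definition reducible :: "'v set \<Rightarrow> ('v \<Rightarrow> 'v \<Rightarrow> bool) \<Rightarrow> 'v set \<Rightarrow> bool" where
  "reducible V A W \<longleftrightarrow> {a + b | a b. a \<in> vspan W \<and> b \<in> perpE V A W} = vspan V"

definition perp_rep :: "'v set \<Rightarrow> ('v \<Rightarrow> 'v \<Rightarrow> bool) \<Rightarrow> 'v set \<Rightarrow> ('v \<Rightarrow> bit) \<Rightarrow> ('v \<Rightarrow> bit)" where
  "perp_rep V A W x = (SOME x'. x' \<in> perpE V A W \<and> x - x' \<in> vspan W)"

definition formEW :: "'v set \<Rightarrow> ('v \<Rightarrow> 'v \<Rightarrow> bool) \<Rightarrow> 'v set \<Rightarrow> ('v \<Rightarrow> bit) \<Rightarrow> ('v \<Rightarrow> bit) \<Rightarrow> bit" where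
  "formEW V A W x1 x2 = formE V A (perp_rep V A W x1) (perp_rep V A W x2)"

definition graph_reduction :: "'v set \<Rightarrow> ('v \<Rightarrow> 'v \<Rightarrow> bool) \<Rightarrow> 'v set \<Rightarrow> 'v \<Rightarrow> 'v \<Rightarrow> bool" where
  "graph_reduction V A W v w \<longleftrightarrow>
     v \<in> V - W \<and> w \<in> V - W \<and> formEW V A W (delta v) (delta w) = 1"

text \<open>rank_H(W1,W2): rank over F2 of the submatrix with rows W1 and columns W2 of the
  adjacency matrix of H, i.e. the dimension of its row space.\<close>
definition rankG :: "('v \<Rightarrow> 'v \<Rightarrow> bool) \<Rightarrow> 'v set \<Rightarrow> 'v set \<Rightarrow> nat" where
  "rankG A W1 W2 = vector_space.dim scaleF2
     (module.span scaleF2 {(\<lambda>c. if c \<in> W2 then adjmat A r c else 0) | r. r \<in> W1})"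

end

theory Submission
  imports Defs
begin

text \<open>
  For c \<in> V let p c be the chosen representative of the basis vector delta c
  in the E-orthogonal complement of W, and u c = p c - delta c, which lies in the span of W.
  Orthogonality of p c to W says that the corrected row of c (the row of c plus the
  u c-combination of the rows of W) vanishes on the columns of W, and the entry (r, c) of
  the reduced graph is the corrected row of r evaluated at c.

  Hence, in the submatrix of A with rows W \<union> W1 and columns W \<union> W2, replacing each row
  r \<in> W1 by its corrected row is a row operation (span and rank are preserved) producing rows
  that vanish on W and agree with the reduced graph on W2.  A column operation (a shear,
  which over F2 is a linear involution and thus preserves dimensions) then clears the
  W2-part of the rows of W.  The result is block diagonal with blocks A[W, W] and
  Gamma_W(G)[W1, W2], and ranks of block diagonal matrices add up.
\<close>

section \<open>General facts about dimensions\<close>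

context vector_space
begin

lemma dim_Un_span_Int_zero:
  assumes fin: "finite P" "finite Q" and meet: "span P \<inter> span Q = {0}"
  shows "dim (P \<union> Q) = dim P + dim Q"
proof -
  obtain BP where BP: "BP \<subseteq> P" "independent BP" "P \<subseteq> span BP" "card BP = dim P"
    using basis_exists by blast
  obtain BQ where BQ: "BQ \<subseteq> Q" "independent BQ" "Q \<subseteq> span BQ" "card BQ = dim Q"
    using basis_exists by blast
  have fin_B: "finite BP" "finite BQ"
    using BP(1) BQ(1) fin finite_subset by auto
  have span_B: "span BP \<subseteq> span P" "span BQ \<subseteq> span Q"
    using BP(1) BQ(1) span_mono by auto
  have disj: "BP \<inter> BQ = {}"
  proof -
    have "BP \<inter> BQ \<subseteq> {0}"
      using meet span_B span_superset[of BP] span_superset[of BQ] by blast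
    then show ?thesis using BP(2) dependent_zero by blast
  qed
  have "independent (BP \<union> BQ)"
  proof
    assume "dependent (BP \<union> BQ)"
    then obtain a where nz: "\<exists>v\<in>BP \<union> BQ. a v \<noteq> 0"
      and sum0: "(\<Sum>v\<in>BP \<union> BQ. a v *s v) = 0"
      using dependent_finite fin_B by auto
    define sp where "sp = (\<Sum>v\<in>BP. a v *s v)"
    define sq where "sq = (\<Sum>v\<in>BQ. a v *s v)"
    have "sp = - sq"
      using sum0 disj fin_B by (simp add: sp_def sq_def sum.union_disjoint eq_neg_iff_add_eq_0)
    moreover have "sp \<in> span BP" "sq \<in> span BQ"
      unfolding sp_def sq_def by (intro span_sum span_scale span_base; assumption)+
    then have "sp \<in> span P" "sq \<in> span Q"
      using span_B by auto
    ultimately have "sp = 0" "sq = 0"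
      using meet span_neg by fastforce+
    then have "\<forall>v\<in>BP. a v = 0" "\<forall>v\<in>BQ. a v = 0"
      using BP(2) BQ(2) dependent_finite fin_B unfolding sp_def sq_def by blast+
    with nz show False by blast
  qed
  moreover have "P \<union> Q \<subseteq> span (BP \<union> BQ)"
    using BP(3) BQ(3) span_mono[of BP "BP \<union> BQ"] span_mono[of BQ "BP \<union> BQ"] by blast
  ultimately have "card (BP \<union> BQ) = dim (P \<union> Q)"
    using BP(1) BQ(1) by (intro basis_card_eq_dim) auto
  then show ?thesis
    using card_Un_disjoint[OF fin_B disj] BP(4) BQ(4) by simp
qed

lemma dim_image_linear_inj:
  assumes lin: "Vector_Spaces.linear scale scale f" and inj: "inj_on f (span S)"
  shows "dim (f ` S) = dim S"
proof -
  interpret f: linear scale scale f by (rule lin)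
  obtain B where B: "B \<subseteq> S" "independent B" "S \<subseteq> span B" "card B = dim S"
    using basis_exists by blast
  have span_B: "span B = span S"
    using B(1,3) span_mono span_span by (metis subset_antisym span_minimal subspace_span)
  have "dim (f ` S) = dim (span (f ` S))" by simp
  also have "span (f ` S) = span (f ` B)"
    using span_B f.span_image by simp
  also have "dim (span (f ` B)) = card (f ` B)"
    using f.independent_injective_image[OF B(2)] inj span_B dim_eq_card_independent by simp
  also have "card (f ` B) = card B"
    using inj_on_subset[OF inj] B(1) span_superset by (intro card_image) blast
  finally show ?thesis using B(4) by simp
qed

lemma dim_Un_image_add:
  assumes "\<And>i. i \<in> I \<Longrightarrow> d i \<in> span Y"
  shows "dim (Y \<union> (\<lambda>i. f i + d i) ` I) = dim (Y \<union> f ` I)"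
proof -
  have "Y \<subseteq> span (Y \<union> f ` I)" "Y \<subseteq> span (Y \<union> (\<lambda>i. f i + d i) ` I)"
    by (auto intro: span_base)
  moreover have "span Y \<subseteq> span (Y \<union> f ` I)" "span Y \<subseteq> span (Y \<union> (\<lambda>i. f i + d i) ` I)"
    by (rule span_mono, blast)+
  moreover have "f i + d i \<in> span (Y \<union> f ` I)" "f i \<in> span (Y \<union> (\<lambda>i. f i + d i) ` I)"
    if "i \<in> I" for i
  proof -
    have d: "d i \<in> span (Y \<union> f ` I)" "d i \<in> span (Y \<union> (\<lambda>i. f i + d i) ` I)"
      using assms[OF that] calculation(3,4) by auto
    show "f i + d i \<in> span (Y \<union> f ` I)"
      using that by (intro span_add[OF span_base d(1)]) auto
    have "f i = (f i + d i) - d i" by simp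
    also have "\<dots> \<in> span (Y \<union> (\<lambda>i. f i + d i) ` I)"
      using that by (intro span_diff[OF span_base d(2)]) auto
    finally show "f i \<in> span (Y \<union> (\<lambda>i. f i + d i) ` I)" .
  qed
  ultimately have "span (Y \<union> (\<lambda>i. f i + d i) ` I) = span (Y \<union> f ` I)"
    unfolding span_eq by auto
  then show ?thesis
    by (metis dim_span)
qed

end

section \<open>The F2-vector space of functions 'v \<Rightarrow> bit\<close>

declare add_bit_eq_xor[simp del] mult_bit_eq_and[simp del]

lemma bit_fun_diff_eq_add: "(f :: 'a \<Rightarrow> bit) - g = f + g"
  by (simp add: fun_eq_iff)

lemma bit_fun_add_self [simp]: "(f :: 'a \<Rightarrow> bit) + f = 0"
  by (simp add: fun_eq_iff)

interpretation F: vector_space scaleF2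
  by unfold_locales (auto simp: scaleF2_def fun_eq_iff algebra_simps)

lemma scaleF2_apply [simp]: "scaleF2 c f x = c * f x"
  by (simp add: scaleF2_def)

lemma sum_fun_apply: "(sum f S) x = (\<Sum>s\<in>S. f s x)"
  for f :: "'a \<Rightarrow> 'b \<Rightarrow> 'c::comm_monoid_add"
  by (induction S rule: infinite_finite_induct) auto

lemma span_support:
  assumes "\<And>f x. f \<in> P \<Longrightarrow> x \<notin> S \<Longrightarrow> f x = 0"
    and "g \<in> F.span P" and "x \<notin> S"
  shows "g x = 0"
  using assms(2) by (induction rule: F.span_induct_alt) (auto simp: assms(1,3))

lemma vspan_support: "f \<in> vspan W \<Longrightarrow> x \<notin> W \<Longrightarrow> f x = 0"
  unfolding vspan_def by (rule span_support[where P = "delta ` W"]) (auto simp: delta_def)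

lemma sum_delta_mult:
  assumes "finite V" "c \<in> V"
  shows "(\<Sum>y\<in>V. delta c y * g y) = (g c :: bit)"
proof -
  have "(\<Sum>y\<in>V. delta c y * g y) = (\<Sum>y\<in>V. if y = c then g y else 0)"
    by (rule sum.cong) (simp_all add: delta_def)
  then show ?thesis
    using assms by simp
qed

lemma formE_add_right: "formE V A x (y + z) = formE V A x y + formE V A x z"
  by (simp add: formE_def distrib_left sum.distrib)

lemma formE_delta_right:
  assumes "finite V" "z \<in> V"
  shows "formE V A x (delta z) = (\<Sum>y\<in>V. x y * adjmat A y z)"
  unfolding formE_def
proof (rule sum.cong[OF refl])
  fix y
  show "(\<Sum>v\<in>V. x y * adjmat A y v * delta z v) = x y * adjmat A y z"
    using sum_delta_mult[OF assms, of "\<lambda>v. x y * adjmat A y v"]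
    by (simp add: mult.commute)
qed

lemma dim_Un_disjoint_support:
  assumes "finite P" "finite Q" and "S1 \<inter> S2 = {}"
    and "\<And>f x. f \<in> P \<Longrightarrow> x \<notin> S1 \<Longrightarrow> f x = 0"
    and "\<And>f x. f \<in> Q \<Longrightarrow> x \<notin> S2 \<Longrightarrow> f x = 0"
  shows "F.dim (P \<union> Q) = F.dim P + F.dim Q"
proof (rule F.dim_Un_span_Int_zero)
  have "g = 0" if g: "g \<in> F.span P" "g \<in> F.span Q" for g
  proof
    fix x
    have "g x = 0" if "x \<notin> S1"
      using span_support[of P S1 g x] assms(4) g(1) that by blast
    moreover have "g x = 0" if "x \<notin> S2"
      using span_support[of Q S2 g x] assms(5) g(2) that by blast
    ultimately show "g x = 0 x"
      using assms(3) by auto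
  qed
  then show "F.span P \<inter> F.span Q = {0}"
    using F.span_zero by blast
qed (fact assms)+

definition rowvec :: "('v \<Rightarrow> 'v \<Rightarrow> bit) \<Rightarrow> 'v set \<Rightarrow> 'v \<Rightarrow> 'v \<Rightarrow> bit" where
  "rowvec M C r = (\<lambda>c. if c \<in> C then M r c else 0)"

lemma rankG_rowvec: "rankG A R C = F.dim (rowvec (adjmat A) C ` R)"
proof -
  have "{(\<lambda>c. if c \<in> C then adjmat A r c else 0) | r. r \<in> R} = rowvec (adjmat A) C ` R"
    by (auto simp: rowvec_def)
  then show ?thesis
    unfolding rankG_def by simp
qed

text \<open>A column operation: for every y \<in> W, add f y times the vector e y to f.  If the
  vectors e y vanish on W, then over F2 this map is a linear involution.\<close>
definition shear :: "'v set \<Rightarrow> ('v \<Rightarrow> 'v \<Rightarrow> bit) \<Rightarrow> ('v \<Rightarrow> bit) \<Rightarrow> 'v \<Rightarrow> bit" where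
  "shear W e f = f + (\<Sum>y\<in>W. scaleF2 (f y) (e y))"

lemma shear_linear: "Vector_Spaces.linear scaleF2 scaleF2 (shear W e)"
  unfolding Vector_Spaces.linear_iff
proof (intro conjI allI F.vector_space_axioms)
  show "shear W e (f + g) = shear W e f + shear W e g" for f g
    by (simp add: shear_def fun_eq_iff sum_fun_apply distrib_right sum.distrib add_ac)
  show "shear W e (scaleF2 c f) = scaleF2 c (shear W e f)" for c f
    by (simp add: shear_def fun_eq_iff sum_fun_apply distrib_left sum_distrib_left mult.assoc)
qed

lemma shear_shear:
  assumes "\<And>x y. x \<in> W \<Longrightarrow> y \<in> W \<Longrightarrow> e y x = 0"
  shows "shear W e (shear W e f) = f"
proof -
  have "shear W e f y = f y" if "y \<in> W" for y
    using that assms by (simp add: shear_def sum_fun_apply)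
  then have "(\<Sum>y\<in>W. scaleF2 (shear W e f y) (e y)) = (\<Sum>y\<in>W. scaleF2 (f y) (e y))"
    by (intro sum.cong) simp_all
  then have "shear W e (shear W e f) = f + (\<Sum>y\<in>W. scaleF2 (f y) (e y)) + (\<Sum>y\<in>W. scaleF2 (f y) (e y))"
    by (simp only: shear_def)
  then show ?thesis
    by (simp only: add.assoc bit_fun_add_self add_0_right)
qed

lemma shear_fixed: "(\<And>y. y \<in> W \<Longrightarrow> f y = 0) \<Longrightarrow> shear W e f = f"
  by (simp add: shear_def)

lemma dim_shear:
  assumes "\<And>x y. x \<in> W \<Longrightarrow> y \<in> W \<Longrightarrow> e y x = 0"
  shows "F.dim (shear W e ` X) = F.dim X"
proof (rule F.dim_image_linear_inj)
  show "inj_on (shear W e) (F.span X)"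
    by (rule inj_on_inverseI[of _ "shear W e"]) (rule shear_shear[OF assms])
qed (rule shear_linear)

section \<open>The orthogonal representatives of basis vectors\<close>

locale reducible_graph =
  fixes V :: "'v set" and A :: "'v \<Rightarrow> 'v \<Rightarrow> bool" and W :: "'v set"
  assumes graph: "is_graph V A" and W_sub: "W \<subseteq> V" and red: "reducible V A W"
begin

lemma finite_V: "finite V"
  using graph by (simp add: is_graph_def)

lemma adjmat_sym: "adjmat A x y = adjmat A y x"
  using graph by (simp add: is_graph_def adjmat_def)

definition p :: "'v \<Rightarrow> 'v \<Rightarrow> bit" where
  "p c = perp_rep V A W (delta c)"

definition u :: "'v \<Rightarrow> 'v \<Rightarrow> bit" where
  "u c = p c + delta c"

lemma p_perp_u_span:
  assumes "c \<in> V"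
  shows "p c \<in> perpE V A W" and "u c \<in> vspan W"
proof -
  have "delta c \<in> vspan V"
    unfolding vspan_def using assms by (intro F.span_base) auto
  then have "delta c \<in> {a + b | a b. a \<in> vspan W \<and> b \<in> perpE V A W}"
    using red by (simp add: reducible_def)
  then obtain a b where ab: "delta c = a + b" "a \<in> vspan W" "b \<in> perpE V A W"
    by blast
  then have "delta c - b \<in> vspan W"
    by simp
  with ab(3) have "\<exists>x'. x' \<in> perpE V A W \<and> delta c - x' \<in> vspan W"
    by blast
  then have "p c \<in> perpE V A W \<and> delta c - p c \<in> vspan W"
    unfolding p_def perp_rep_def by (rule someI_ex)
  then show "p c \<in> perpE V A W" and "u c \<in> vspan W"
    by (simp_all add: u_def bit_fun_diff_eq_add add.commute)
qed

lemma u_support: "c \<in> V \<Longrightarrow> x \<notin> W \<Longrightarrow> u c x = 0"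
  by (rule vspan_support[OF p_perp_u_span(2)])

lemma p_eq: "p c = delta c + u c"
  by (simp add: u_def fun_eq_iff add.assoc[symmetric])

definition crow :: "'v \<Rightarrow> 'v \<Rightarrow> bit" where
  "crow c z = adjmat A c z + (\<Sum>x\<in>W. u c x * adjmat A x z)"

lemma formE_p_delta:
  assumes "c \<in> V" "z \<in> V"
  shows "formE V A (p c) (delta z) = crow c z"
proof -
  have "formE V A (p c) (delta z)
      = (\<Sum>y\<in>V. delta c y * adjmat A y z) + (\<Sum>y\<in>V. u c y * adjmat A y z)"
    using finite_V assms(2) by (simp add: formE_delta_right p_eq distrib_right sum.distrib)
  also have "(\<Sum>y\<in>V. delta c y * adjmat A y z) = adjmat A c z"
    by (rule sum_delta_mult[OF finite_V assms(1)])
  also have "(\<Sum>y\<in>V. u c y * adjmat A y z) = (\<Sum>x\<in>W. u c x * adjmat A x z)"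
    using assms(1) u_support W_sub finite_V by (intro sum.mono_neutral_right) auto
  finally show ?thesis
    by (simp add: crow_def)
qed

text \<open>Orthogonality of p c to W: the corrected row vanishes on the columns of W.\<close>
lemma crow_W:
  assumes "c \<in> V" "w \<in> W"
  shows "crow c w = 0"
proof -
  have "delta w \<in> vspan W"
    unfolding vspan_def using assms(2) by (intro F.span_base) auto
  then have "formE V A (p c) (delta w) = 0"
    using p_perp_u_span(1)[OF assms(1)] by (simp add: perpE_def)
  then show ?thesis
    using formE_p_delta assms W_sub by auto
qed

lemma adjmat_reduction:
  assumes "r \<in> V - W" "c \<in> V - W"
  shows "adjmat (graph_reduction V A W) r c = crow r c"
proof -
  have "formE V A (p r) (u c) = 0"
    using p_perp_u_span assms by (simp add: perpE_def)
  then have "formEW V A W (delta r) (delta c) = formE V A (p r) (delta c)"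
    by (simp add: formEW_def p_eq[of c] formE_add_right flip: p_def)
  also have "\<dots> = crow r c"
    using assms by (simp add: formE_p_delta)
  finally show ?thesis
    using assms by (cases "crow r c") (auto simp: adjmat_def graph_reduction_def)
qed

lemma reduction_row:
  assumes W2: "W2 \<subseteq> V - W" and r: "r \<in> V - W"
  shows "rowvec (adjmat (graph_reduction V A W)) W2 r
       = rowvec (adjmat A) (W \<union> W2) r + (\<Sum>x\<in>W. scaleF2 (u r x) (rowvec (adjmat A) (W \<union> W2) x))"
    (is "_ = ?corrected")
proof -
  have "?corrected = rowvec crow (W \<union> W2) r"
    by (simp add: fun_eq_iff rowvec_def sum_fun_apply crow_def)
  also have "\<dots> = rowvec (adjmat (graph_reduction V A W)) W2 r"
    using W2 r by (auto simp: fun_eq_iff rowvec_def crow_W adjmat_reduction)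
  finally show ?thesis ..
qed

text \<open>Column operation: adding to each column c \<in> W2 the u c-combination of the
  columns of W clears the W2-part of the rows of W (by orthogonality and symmetry).\<close>
definition col_corr :: "'v set \<Rightarrow> 'v \<Rightarrow> 'v \<Rightarrow> bit" where
  "col_corr W2 y = (\<lambda>c. if c \<in> W2 then u c y else 0)"

lemma shear_row_W:
  assumes W2: "W2 \<subseteq> V - W" and x: "x \<in> W"
  shows "shear W (col_corr W2) (rowvec (adjmat A) (W \<union> W2) x) = rowvec (adjmat A) W x"
proof
  fix c
  have "(\<Sum>y\<in>W. rowvec (adjmat A) (W \<union> W2) x y * u c y) = (\<Sum>y\<in>W. u c y * adjmat A y x)"
    by (intro sum.cong) (auto simp: rowvec_def adjmat_sym mult.commute)
  then have "c \<in> W2 \<Longrightarrow> shear W (col_corr W2) (rowvec (adjmat A) (W \<union> W2) x) c = crow c x"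
    by (simp add: shear_def col_corr_def rowvec_def sum_fun_apply crow_def adjmat_sym)
  then show "shear W (col_corr W2) (rowvec (adjmat A) (W \<union> W2) x) c = rowvec (adjmat A) W x c"
    using W2 x by (cases "c \<in> W2") (auto simp: crow_W shear_def col_corr_def rowvec_def sum_fun_apply)
qed

lemma shear_reduction_row:
  assumes "W2 \<subseteq> V - W"
  shows "shear W (col_corr W2) (rowvec (adjmat (graph_reduction V A W)) W2 r)
       = rowvec (adjmat (graph_reduction V A W)) W2 r"
  using assms by (intro shear_fixed) (auto simp: rowvec_def)

end

theorem mainTheorem3:
  fixes V W W1 W2 :: "'v set" and A :: "'v \<Rightarrow> 'v \<Rightarrow> bool"
  assumes "is_graph V A"
    and "W \<subseteq> V"
    and "reducible V A W"
    and "W1 \<subseteq> V - W" and "W2 \<subseteq> V - W"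
  shows "rankG (graph_reduction V A W) W1 W2 = rankG A (W \<union> W1) (W \<union> W2) - rankG A W W"
proof -
  interpret reducible_graph V A W
    using assms(1-3) by unfold_locales
  define R where "R = rowvec (adjmat A) (W \<union> W2)"
  define G where "G = rowvec (adjmat (graph_reduction V A W)) W2"
  have fin: "finite W" "finite W1"
    using assms(2,4) finite_V by (auto intro: finite_subset)
  have G_eq: "G ` W1 = (\<lambda>r. R r + (\<Sum>x\<in>W. scaleF2 (u r x) (R x))) ` W1"
    using reduction_row[OF assms(5)] assms(4) unfolding R_def G_def by (intro image_cong) auto
  have "rankG A (W \<union> W1) (W \<union> W2) = F.dim (R ` W \<union> R ` W1)"
    by (simp add: rankG_rowvec R_def image_Un)
  also have "\<dots> = F.dim (R ` W \<union> G ` W1)"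
    unfolding G_eq by (intro F.dim_Un_image_add[symmetric] F.span_sum F.span_scale F.span_base) auto
  also have "\<dots> = F.dim (shear W (col_corr W2) ` (R ` W \<union> G ` W1))"
    using assms(5) by (intro dim_shear[symmetric]) (auto simp: col_corr_def)
  also have "shear W (col_corr W2) ` (R ` W \<union> G ` W1) = rowvec (adjmat A) W ` W \<union> G ` W1"
    using shear_row_W[OF assms(5)] shear_reduction_row[OF assms(5)] unfolding R_def G_def
    by (simp add: image_Un image_image)
  also have "F.dim \<dots> = F.dim (rowvec (adjmat A) W ` W) + F.dim (G ` W1)"
    using fin assms(5) by (intro dim_Un_disjoint_support[of _ _ W W2]) (auto simp: rowvec_def G_def)
  also have "\<dots> = rankG A W W + rankG (graph_reduction V A W) W1 W2"
    by (simp add: rankG_rowvec G_def)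
  finally show ?thesis
    by simp
qed

end
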